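(* Let $k$ be a positive integer and $n_0,\ldots,n_{k-1}$ positive integers, with indices read modulo $k$. For each $j\in\{0,\ldots,k-1\}$ let $A^{(j)}$ be a real $n_j\times n_{j+1}$ matrix. Suppose that every edge of the signed digraph $G=G_{A^{(0)}A^{(1)}\cdots A^{(k-1)}}$ lies on a single e-cycle $C$ of length $kr$ (for some positive integer $r$), i.e. the edge set of $G$ is exactly the edge set of $C$. Then $A=A^{(0)}A^{(1)}\cdots A^{(k-1)}$ is not a $P_0$-matrix.
   Context: Indices $j$ are taken modulo $k$. The signed digraph $G=G_{A^{(0)}\cdots A^{(k-1)}}$ has vertex set the disjoint union of $V_0,\ldots,V_{k-1}$ with $V_j=\{V_j^1,\ldots,V_j^{n_j}\}$; there is a directed edge from $V_j^r$ to $V_{j+1}^s$ iff $(A^{(j)})_{rs}\neq 0$, with the sign of $(A^{(j)})_{rs}$; no other edges (loops allowed when $k=1$). A cycle means a directed cycle (no repeated vertices); every cycle has length a multiple of $k$. A cycle with $kr_1$ edges, $r_2$ of them negative, is an e-cycle if $(-1)^{r_1+r_2}=1$ and an o-cycle otherwise. A $P_0$-matrix is a real square matrix all of whose principal minors are nonnegative. *)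

theory Defs
  imports "Jordan_Normal_Form.Determinant" "Jordan_Normal_Form.DL_Submatrix"
begin

text \<open>Block matrices: A j is an n j by n ((j+1) mod k) real matrix, for j < k.
Vertices of the signed digraph are pairs (j, r) with j < k and r < n j (vertex V_j^(r+1)).\<close>

definition sd_edge :: "nat \<Rightarrow> (nat \<Rightarrow> nat) \<Rightarrow> (nat \<Rightarrow> real mat) \<Rightarrow> nat \<times> nat \<Rightarrow> nat \<times> nat \<Rightarrow> bool" where
  "sd_edge k n A u v \<longleftrightarrow>
     fst u < k \<and> snd u < n (fst u) \<and> fst v = (fst u + 1) mod k \<and> snd v < n (fst v) \<and>
     A (fst u) $$ (snd u, snd v) \<noteq> 0"

definition sd_edges :: "nat \<Rightarrow> (nat \<Rightarrow> nat) \<Rightarrow> (nat \<Rightarrow> real mat) \<Rightarrow> ((nat \<times> nat) \<times> (nat \<times> nat)) set" where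
  "sd_edges k n A = {(u, v). sd_edge k n A u v}"

definition edge_negative :: "(nat \<Rightarrow> real mat) \<Rightarrow> nat \<times> nat \<Rightarrow> nat \<times> nat \<Rightarrow> bool" where
  "edge_negative A u v \<longleftrightarrow> A (fst u) $$ (snd u, snd v) < 0"

definition sd_cycle :: "nat \<Rightarrow> (nat \<Rightarrow> nat) \<Rightarrow> (nat \<Rightarrow> real mat) \<Rightarrow> (nat \<times> nat) list \<Rightarrow> bool" where
  "sd_cycle k n A vs \<longleftrightarrow> vs \<noteq> [] \<and> distinct vs \<and>
     (\<forall>i < length vs. sd_edge k n A (vs ! i) (vs ! ((i + 1) mod length vs)))"

definition cycle_edges :: "(nat \<times> nat) list \<Rightarrow> ((nat \<times> nat) \<times> (nat \<times> nat)) set" where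
  "cycle_edges vs = {(vs ! i, vs ! ((i + 1) mod length vs)) | i. i < length vs}"

definition cycle_neg_count :: "(nat \<Rightarrow> real mat) \<Rightarrow> (nat \<times> nat) list \<Rightarrow> nat" where
  "cycle_neg_count A vs = card {i. i < length vs \<and> edge_negative A (vs ! i) (vs ! ((i + 1) mod length vs))}"

definition e_cycle :: "nat \<Rightarrow> (nat \<Rightarrow> nat) \<Rightarrow> (nat \<Rightarrow> real mat) \<Rightarrow> (nat \<times> nat) list \<Rightarrow> bool" where
  "e_cycle k n A vs \<longleftrightarrow> sd_cycle k n A vs \<and> k dvd length vs \<and>
     (-1::int) ^ (length vs div k + cycle_neg_count A vs) = 1"

definition P0_matrix :: "real mat \<Rightarrow> bool" where
  "P0_matrix M \<longleftrightarrow> square_mat M \<and>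
     (\<forall>I. I \<subseteq> {0..<dim_row M} \<longrightarrow> I \<noteq> {} \<longrightarrow> det (submatrix M I I) \<ge> 0)"

definition cyc_prod :: "nat \<Rightarrow> (nat \<Rightarrow> nat) \<Rightarrow> (nat \<Rightarrow> real mat) \<Rightarrow> real mat" where
  "cyc_prod k n A = foldr (\<lambda>j M. A j * M) [0..<k] (1\<^sub>m (n 0))"

end

theory Submission
  imports Defs "HOL-Combinatorics.Cycles"
begin

text \<open>Every edge of the digraph lies on the single cycle C, so every vertex of C has exactly
one outgoing edge: each row of a block A(j) visited by C has a single nonzero entry.
Following C once through the k layers, the row of the product A indexed by a vertex of C in
V_0 therefore has a single nonzero entry, in the column of the next vertex of C in V_0, and
it equals the product of the k edge weights in between. So the principal submatrix of A on
the r vertices of C in V_0 is a weighted cyclic permutation matrix of an r-cycle; its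
determinant is (-1)^(r-1) times the product of all edge weights of C, whose sign is
(-1)^r2. For an e-cycle r + r2 is even, so this principal minor is negative.\<close>

lemma sign_cycle_of_list:
  "distinct cs \<Longrightarrow> sign (cycle_of_list cs) = (-1) ^ (length cs - 1)"
proof (induction cs rule: cycle_of_list.induct)
  case (1 i j cs)
  have "sign (cycle_of_list (i # j # cs)) = sign (transpose i j) * sign (cycle_of_list (j # cs))"
    by (simp add: sign_compose permutation_swap_id permutation_of_cycle)
  also have "\<dots> = (-1) ^ (length (i # j # cs) - 1)"
    using 1 by (simp add: sign_swap_id)
  finally show ?case .
qed simp_all

lemma sgn_prod:
  fixes f :: "'a \<Rightarrow> 'b::linordered_idom"
  shows "sgn (prod f S) = (\<Prod>x\<in>S. sgn (f x))"
  by (induction S rule: infinite_finite_induct) (simp_all add: sgn_mult)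

lemma sgn_prod_nonzero:
  fixes f :: "'a \<Rightarrow> 'b::linordered_idom"
  assumes "finite S" "\<And>x. x \<in> S \<Longrightarrow> f x \<noteq> 0"
  shows "sgn (prod f S) = (-1) ^ card {x\<in>S. f x < 0}"
proof -
  have "sgn (prod f S) = (\<Prod>x\<in>S. if f x < 0 then -1 else 1)"
    unfolding sgn_prod using assms(2) by (intro prod.cong) (auto simp: sgn_if)
  also have "\<dots> = (-1) ^ card {x\<in>S. f x < 0}"
    using assms(1) by (simp add: prod.If_cases Collect_conj_eq Int_commute)
  finally show ?thesis .
qed

lemma prod_lessThan_Suc_mod:
  fixes g :: "nat \<Rightarrow> 'a::comm_monoid_mult"
  shows "(\<Prod>t<m. g (Suc t mod m)) = (\<Prod>t<m. g t)"
proof (cases m)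
  case (Suc m')
  have "(\<Prod>t<m. g (Suc t mod m)) = (\<Prod>t<m'. g (Suc t mod m)) * g 0"
    using Suc by (simp add: prod.lessThan_Suc)
  also have "(\<Prod>t<m'. g (Suc t mod m)) = (\<Prod>t<m'. g (Suc t))"
    using Suc by (intro prod.cong) auto
  also have "(\<Prod>t<m'. g (Suc t)) * g 0 = (\<Prod>t<m. g t)"
    unfolding Suc prod.lessThan_Suc_shift by (simp add: mult.commute)
  finally show ?thesis .
qed simp

lemma prod_rotate_mod:
  fixes f :: "nat \<Rightarrow> 'a::comm_monoid_mult"
  shows "(\<Prod>t<m. f ((i + t) mod m)) = (\<Prod>t<m. f t)"
proof (induction i)
  case (Suc i)
  have "(\<Prod>t<m. f ((Suc i + t) mod m)) = (\<Prod>t<m. f ((i + Suc t mod m) mod m))"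
    by (simp add: mod_add_right_eq)
  also have "\<dots> = (\<Prod>t<m. f ((i + t) mod m))"
    by (rule prod_lessThan_Suc_mod)
  finally show ?case
    using Suc.IH by simp
qed simp

lemma sgn_neg_one_power: "sgn ((-1::'a::linordered_idom) ^ m) = (-1) ^ m"
  by (simp add: minus_one_power_iff)

lemma add_mod_cancel_left_nat:
  fixes a b c m :: nat
  assumes "(a + b) mod m = (a + c) mod m"
  shows "b mod m = c mod m"
proof -
  have "c mod m = b mod m" if "b \<le> c" "(a + c) mod m = (a + b) mod m" for b c
  proof -
    have "m dvd (a + c) - (a + b)"
      using mod_eq_dvd_iff_nat[of "a + b" "a + c" m] that by simp
    then show ?thesis
      using mod_eq_dvd_iff_nat[of b c m] that(1) by simp
  qed
  then show ?thesis
    using assms by (metis nat_le_linear)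
qed

section \<open>Weighted cyclic permutation matrices\<close>

lemma mult_mat_index_single_entry_row:
  fixes A B :: "'a::comm_ring_1 mat"
  assumes "A \<in> carrier_mat nr nm" "B \<in> carrier_mat nm nc" "a < nr" "c < nc" "b < nm"
    and "\<And>b'. b' < nm \<Longrightarrow> A $$ (a, b') = (if b' = b then w else 0)"
  shows "(A * B) $$ (a, c) = w * B $$ (b, c)"
proof -
  have "(A * B) $$ (a, c) = (\<Sum>b'\<in>{0..<nm}. A $$ (a, b') * B $$ (b', c))"
    using assms(1-4) by (simp add: scalar_prod_def)
  also have "\<dots> = (\<Sum>b'\<in>{0..<nm}. if b' = b then w * B $$ (b, c) else 0)"
    using assms(6) by (intro sum.cong) auto
  finally show ?thesis using assms(5) by simp
qed

lemma det_weighted_permutation_mat: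
  fixes B :: "'a::comm_ring_1 mat"
  assumes B: "B \<in> carrier_mat r r" and p: "p permutes {0..<r}"
    and entries: "\<And>i j. i < r \<Longrightarrow> j < r \<Longrightarrow> B $$ (i, j) = (if j = p i then V i else 0)"
  shows "det B = signof p * (\<Prod>i<r. V i)"
proof -
  have vanish: "(\<Prod>i=0..<r. B $$ (i, q i)) = 0" if "q permutes {0..<r}" "q \<noteq> p" for q
  proof -
    obtain i where "q i \<noteq> p i" using \<open>q \<noteq> p\<close> by blast
    have "i < r"
    proof (rule ccontr)
      assume "\<not> i < r"
      then have "q i = i" "p i = i" using that(1) p by (simp_all add: permutes_not_in)
      then show False using \<open>q i \<noteq> p i\<close> by simp
    qed
    moreover have "q i < r" using that \<open>i < r\<close> by (simp add: permutes_in_image)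
    ultimately show ?thesis using \<open>q i \<noteq> p i\<close> entries by (intro prod_zero) force+
  qed
  have "det B = (\<Sum>q\<in>{q. q permutes {0..<r}}.
      if q = p then signof p * (\<Prod>i=0..<r. B $$ (i, p i)) else 0)"
    unfolding det_def'[OF B] using vanish by (intro sum.cong) auto
  also have "\<dots> = signof p * (\<Prod>i=0..<r. B $$ (i, p i))"
    using p by (simp add: finite_permutations)
  also have "(\<Prod>i=0..<r. B $$ (i, p i)) = (\<Prod>i<r. V i)"
    using p by (intro prod.cong) (auto simp: entries permutes_in_image)
  finally show ?thesis .
qed

lemma det_weighted_cycle_mat:
  fixes B :: "'a::comm_ring_1 mat"
  assumes B: "B \<in> carrier_mat r r" and h: "bij_betw h {..<r} {..<r}"
    and entries: "\<And>s s'. s < r \<Longrightarrow> s' < r \<Longrightarrow>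
      B $$ (h s, h s') = (if s' = Suc s mod r then W s else 0)"
  shows "det B = (-1) ^ (r - 1) * (\<Prod>s<r. W s)"
proof -
  define cs where "cs = map h [0..<r]"
  have cs: "distinct cs" "set cs = {0..<r}" "length cs = r"
    using h by (simp_all add: cs_def bij_betw_def distinct_map lessThan_atLeast0)
  define p where "p = cycle_of_list cs"
  have p: "p permutes {0..<r}"
    using cycle_permutes[of cs] cs(2) by (simp add: p_def)
  have p_h: "p (h s) = h (Suc s mod r)" if "s < r" for s
  proof -
    have "map p cs = rotate1 cs"
      using cyclic_rotation[OF cs(1), of 1] by (simp add: p_def)
    then have "p (cs ! s) = rotate1 cs ! s"
      using that cs(3) by (metis nth_map)
    also have "\<dots> = cs ! (Suc s mod r)"
      using that cs(3) by (simp add: nth_rotate1)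
    finally show ?thesis using that by (simp add: cs_def)
  qed
  have inj: "inj_on h {..<r}"
    using h by (simp add: bij_betw_def)
  define V where "V i = W (inv_into {..<r} h i)" for i
  have "B $$ (i, j) = (if j = p i then V i else 0)" if "i < r" "j < r" for i j
  proof -
    have "i \<in> h ` {..<r}" "j \<in> h ` {..<r}"
      using h that by (simp_all add: bij_betw_def)
    then obtain s s' where s: "s < r" "i = h s" and s': "s' < r" "j = h s'"
      unfolding image_iff lessThan_iff by (elim bexE) simp
    have "(h s' = h (Suc s mod r)) = (s' = Suc s mod r)"
      using inj_on_eq_iff[OF inj] s(1) s'(1) by simp
    then show ?thesis
      using s s' by (simp add: entries p_h V_def inv_into_f_f[OF inj])
  qed
  then have "det B = signof p * (\<Prod>i<r. V i)"
    by (rule det_weighted_permutation_mat[OF B p])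
  also have "signof p = ((-1) ^ (r - 1) :: 'a)"
    using sign_cycle_of_list[OF cs(1)] cs(3) by (simp add: p_def)
  also have "(\<Prod>i<r. V i) = (\<Prod>s<r. W s)"
    using prod.reindex_bij_betw[OF h, of V] by (simp add: V_def inv_into_f_f[OF inj])
  finally show ?thesis .
qed

lemma det_submatrix_weighted_cycle:
  fixes M :: "'a::comm_ring_1 mat"
  assumes inj: "inj_on e {..<r}"
    and dims: "\<And>s. s < r \<Longrightarrow> e s < dim_row M" "\<And>s. s < r \<Longrightarrow> e s < dim_col M"
    and entries: "\<And>s s'. s < r \<Longrightarrow> s' < r \<Longrightarrow>
      M $$ (e s, e s') = (if s' = Suc s mod r then W s else 0)"
  shows "det (submatrix M (e ` {..<r}) (e ` {..<r})) = (-1) ^ (r - 1) * (\<Prod>s<r. W s)"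
proof -
  let ?I = "e ` {..<r}"
  have rows: "{i. i < dim_row M \<and> i \<in> ?I} = ?I" and cols: "{j. j < dim_col M \<and> j \<in> ?I} = ?I"
    using dims by blast+
  have card: "card ?I = r"
    using card_image[OF inj] by simp
  have carrier: "submatrix M ?I ?I \<in> carrier_mat r r"
    unfolding carrier_mat_def by (simp only: dim_submatrix rows cols card mem_Collect_eq simp_thms)
  \<comment> \<open>the position of row \<open>e s\<close> inside the submatrix\<close>
  define h where "h s = card {a \<in> ?I. a < e s}" for s
  have h_less: "h s < r" if "s < r" for s
  proof -
    have "e s \<in> ?I" "e s \<notin> {a \<in> ?I. a < e s}"
      using that by simp_all
    then have "{a \<in> ?I. a < e s} \<subset> ?I"
      by blast
    then have "card {a \<in> ?I. a < e s} < card ?I"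
      by (intro psubset_card_mono) simp_all
    then show ?thesis unfolding h_def card .
  qed
  have h_inj: "inj_on h {..<r}"
  proof (rule inj_onI)
    fix s s' assume s: "s \<in> {..<r}" and s': "s' \<in> {..<r}" and "h s = h s'"
    have "e s = pick ?I (h s)" "e s' = pick ?I (h s')"
      using s s' by (simp_all add: h_def pick_card_in_set)
    then have "e s = e s'"
      using \<open>h s = h s'\<close> by simp
    then show "s = s'"
      by (rule inj_onD[OF inj _ s s'])
  qed
  have "h ` {..<r} \<subseteq> {..<r}"
    using h_less by auto
  then have h: "bij_betw h {..<r} {..<r}"
    unfolding bij_betw_def using endo_inj_surj[OF finite_lessThan _ h_inj] h_inj by blast
  have "submatrix M ?I ?I $$ (h s, h s') = (if s' = Suc s mod r then W s else 0)"
    if "s < r" "s' < r" for s s'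
  proof -
    have "submatrix M ?I ?I $$ (h s, h s') = M $$ (e s, e s')"
      unfolding h_def using that by (intro submatrix_index_card) (simp_all add: dims)
    then show ?thesis
      using that by (simp add: entries)
  qed
  then show ?thesis
    by (rule det_weighted_cycle_mat[OF carrier h])
qed

section \<open>Products along a walk through the layers\<close>

text \<open>\<open>x t\<close> is a vertex of the layer \<open>V_(t mod k)\<close>, i.e. a row index of \<open>A (t mod k)\<close>,
whose only outgoing edge goes to \<open>x (Suc t)\<close>.\<close>

locale layered_walk =
  fixes k :: nat and n :: "nat \<Rightarrow> nat" and A :: "nat \<Rightarrow> real mat" and x :: "nat \<Rightarrow> nat"
  assumes carrier: "\<And>j. j < k \<Longrightarrow> A j \<in> carrier_mat (n j) (n (Suc j mod k))"
    and walk_index: "\<And>t. x t < n (t mod k)"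
    and walk_row: "\<And>t b. b < n (Suc t mod k) \<Longrightarrow>
      A (t mod k) $$ (x t, b) = (if b = x (Suc t) then A (t mod k) $$ (x t, x (Suc t)) else 0)"
begin

abbreviation weight :: "nat \<Rightarrow> real" where
  "weight t \<equiv> A (t mod k) $$ (x t, x (Suc t))"

abbreviation suffix_prod :: "nat \<Rightarrow> real mat" where
  "suffix_prod j \<equiv> foldr (\<lambda>j M. A j * M) [j..<k] (1\<^sub>m (n 0))"

lemma suffix_prod_Suc: "j < k \<Longrightarrow> suffix_prod j = A j * suffix_prod (Suc j)"
  by (simp add: upt_rec)

lemma suffix_prod_carrier: "j \<le> k \<Longrightarrow> suffix_prod j \<in> carrier_mat (n (j mod k)) (n 0)"
proof (induction j rule: inc_induct)
  case (step j)
  then show ?case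
    using carrier[of j] by (simp add: suffix_prod_Suc)
qed simp

lemma suffix_prod_walk_row:
  assumes "j \<le> k" "t mod k = j mod k" "c < n 0"
  shows "suffix_prod j $$ (x t, c) =
    (if c = x (t + (k - j)) then \<Prod>s\<in>{t..<t + (k - j)}. weight s else 0)"
  using assms
proof (induction j arbitrary: t rule: inc_induct)
  case base
  then have "x t < n 0"
    using walk_index[of t] by simp
  then show ?case
    using base by auto
next
  case (step j)
  have t_mod: "t mod k = j"
    using step by simp
  then have "Suc t mod k = Suc j mod k"
    by (metis mod_Suc_eq)
  note t = t_mod this
  have row: "A j $$ (x t, b) = (if b = x (Suc t) then weight t else 0)" if "b < n (Suc j mod k)" for b
    using walk_row[of b t] that t by simp
  have "suffix_prod j $$ (x t, c) = weight t * suffix_prod (Suc j) $$ (x (Suc t), c)"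
    unfolding suffix_prod_Suc[OF step(2)]
  proof (rule mult_mat_index_single_entry_row)
    show "A j \<in> carrier_mat (n j) (n (Suc j mod k))"
      using carrier step(2) .
    show "suffix_prod (Suc j) \<in> carrier_mat (n (Suc j mod k)) (n 0)"
      using suffix_prod_carrier step(2) by simp
  qed (use walk_index[of t] walk_index[of "Suc t"] row step t in \<open>simp_all\<close>)
  also have "\<dots> = (if c = x (t + (k - j)) then \<Prod>s\<in>{t..<t + (k - j)}. weight s else 0)"
    using step t by (simp add: prod.atLeast_Suc_lessThan Suc_diff_Suc)
  finally show ?case .
qed

lemma cyc_prod_carrier: "cyc_prod k n A \<in> carrier_mat (n 0) (n 0)"
  using suffix_prod_carrier[of 0] by (simp add: cyc_prod_def)

lemma cyc_prod_walk_row: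
  assumes "t mod k = 0" "c < n 0"
  shows "cyc_prod k n A $$ (x t, c) = (if c = x (t + k) then \<Prod>s\<in>{t..<t + k}. weight s else 0)"
  using suffix_prod_walk_row[of 0 t c] assms by (simp add: cyc_prod_def)

lemma cyc_prod_cycle_row:
  assumes "0 < r" "s < r" "c < n 0" and period: "\<And>t. x (t + r * k) = x t"
  shows "cyc_prod k n A $$ (x (s * k), c) =
    (if c = x (Suc s mod r * k) then \<Prod>t\<in>{s * k..<s * k + k}. weight t else 0)"
proof -
  have "x (s * k + k) = x (Suc s mod r * k)"
  proof (cases "Suc s = r")
    case True
    then have "s * k + k = 0 + r * k"
      by auto
    then show ?thesis
      using period[of 0] True by simp
  next
    case False
    then show ?thesis
      using \<open>s < r\<close> by (simp add: add.commute)
  qed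
  then show ?thesis
    using cyc_prod_walk_row[of "s * k" c] \<open>c < n 0\<close> by simp
qed

lemma cyc_prod_principal_minor:
  assumes "0 < k" "0 < r" and period: "\<And>t. x (t + r * k) = x t"
    and injective: "\<And>t t'. t < r * k \<Longrightarrow> t' < r * k \<Longrightarrow> t mod k = t' mod k \<Longrightarrow>
      x t = x t' \<Longrightarrow> t = t'"
  obtains I where "I \<subseteq> {0..<dim_row (cyc_prod k n A)}" "I \<noteq> {}"
    "det (submatrix (cyc_prod k n A) I I) = (-1) ^ (r - 1) * (\<Prod>t<r * k. weight t)"
proof -
  define e where "e s = x (s * k)" for s
  have dims: "dim_row (cyc_prod k n A) = n 0" "dim_col (cyc_prod k n A) = n 0"
    using cyc_prod_carrier by auto
  have e_less: "e s < n 0" for s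
    using walk_index[of "s * k"] by (simp add: e_def)
  have e_inj: "inj_on e {..<r}"
  proof (rule inj_onI)
    fix s s' assume "s \<in> {..<r}" "s' \<in> {..<r}" "e s = e s'"
    then have "s * k = s' * k"
      using injective[of "s * k" "s' * k"] \<open>0 < k\<close> by (simp add: e_def)
    then show "s = s'"
      using \<open>0 < k\<close> by simp
  qed
  have entries: "cyc_prod k n A $$ (e s, e s') =
      (if s' = Suc s mod r then \<Prod>t\<in>{s * k..<s * k + k}. weight t else 0)"
    if "s < r" "s' < r" for s s'
  proof -
    have "(e s' = e (Suc s mod r)) = (s' = Suc s mod r)"
      using inj_on_eq_iff[OF e_inj] that by simp
    then show ?thesis
      using cyc_prod_cycle_row[OF \<open>0 < r\<close> that(1) e_less period, of s'] by (simp only: e_def)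
  qed
  have "det (submatrix (cyc_prod k n A) (e ` {..<r}) (e ` {..<r})) =
      (-1) ^ (r - 1) * (\<Prod>s<r. \<Prod>t\<in>{s * k..<s * k + k}. weight t)"
    by (rule det_submatrix_weighted_cycle[OF e_inj]) (simp_all add: dims e_less entries)
  moreover have "e ` {..<r} \<subseteq> {0..<dim_row (cyc_prod k n A)}"
    using e_less by (auto simp: dims)
  moreover have "e ` {..<r} \<noteq> {}"
    using \<open>0 < r\<close> by blast
  ultimately show ?thesis
    unfolding prod.nat_group using that by blast
qed

end

section \<open>A digraph that is a single cycle\<close>

definition cycle_weight :: "(nat \<Rightarrow> real mat) \<Rightarrow> (nat \<times> nat) list \<Rightarrow> real" where
  "cycle_weight A vs =
    (\<Prod>i<length vs. A (fst (vs ! i)) $$ (snd (vs ! i), snd (vs ! ((i + 1) mod length vs))))"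

lemma sgn_cycle_weight:
  assumes "sd_cycle k n A vs"
  shows "sgn (cycle_weight A vs) = (-1) ^ cycle_neg_count A vs"
proof -
  let ?w = "\<lambda>i. A (fst (vs ! i)) $$ (snd (vs ! i), snd (vs ! ((i + 1) mod length vs)))"
  have "sgn (cycle_weight A vs) = (-1) ^ card {i \<in> {..<length vs}. ?w i < 0}"
    unfolding cycle_weight_def using assms
    by (intro sgn_prod_nonzero) (simp_all add: sd_cycle_def sd_edge_def)
  also have "{i \<in> {..<length vs}. ?w i < 0} =
      {i. i < length vs \<and> edge_negative A (vs ! i) (vs ! ((i + 1) mod length vs))}"
    by (auto simp: edge_negative_def)
  finally show ?thesis
    by (simp add: cycle_neg_count_def)
qed

lemma e_cycle_length_parity:
  assumes "e_cycle k n A vs"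
  shows "length vs = length vs div k * k" "0 < length vs div k"
    "even (length vs div k + cycle_neg_count A vs)"
proof -
  have "vs \<noteq> []" "k dvd length vs" and sign: "(-1::int) ^ (length vs div k + cycle_neg_count A vs) = 1"
    using assms by (simp_all add: e_cycle_def sd_cycle_def)
  obtain q where q: "length vs = k * q"
    using \<open>k dvd length vs\<close> by (rule dvdE)
  moreover have "k * q \<noteq> 0"
    using q[symmetric] \<open>vs \<noteq> []\<close> by simp
  ultimately show "length vs = length vs div k * k" "0 < length vs div k"
    by simp_all
  show "even (length vs div k + cycle_neg_count A vs)"
    using sign by (cases "even (length vs div k + cycle_neg_count A vs)") (simp_all add: minus_one_power_iff)
qed

lemma sd_cycle_layer:
  assumes cycle: "sd_cycle k n A vs" and i: "i < length vs"
  shows "fst (vs ! ((i + t) mod length vs)) = (fst (vs ! i) + t) mod k"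
proof (induction t)
  case 0
  have "fst (vs ! i) < k"
    using cycle i by (simp add: sd_cycle_def sd_edge_def)
  then show ?case
    using i by simp
next
  case (Suc t)
  define q where "q = (i + t) mod length vs"
  have "q < length vs"
    using i unfolding q_def by (intro mod_less_divisor) (cases vs, simp_all)
  then have "fst (vs ! ((q + 1) mod length vs)) = (fst (vs ! q) + 1) mod k"
    using cycle by (simp add: sd_cycle_def sd_edge_def)
  moreover have "(q + 1) mod length vs = (i + Suc t) mod length vs"
    by (simp add: q_def mod_Suc_eq)
  moreover have "fst (vs ! q) = (fst (vs ! i) + t) mod k"
    unfolding q_def by (rule Suc.IH)
  ultimately have "fst (vs ! ((i + Suc t) mod length vs)) = ((fst (vs ! i) + t) mod k + 1) mod k"
    by simp
  also have "\<dots> = (fst (vs ! i) + Suc t) mod k"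
    by (simp add: mod_Suc_eq)
  finally show ?case .
qed

lemma sd_cycle_meets_layer_zero:
  assumes cycle: "sd_cycle k n A vs"
  obtains i0 where "i0 < length vs" "fst (vs ! i0) = 0"
proof -
  have len: "0 < length vs"
    using cycle by (simp add: sd_cycle_def)
  then have "sd_edge k n A (vs ! 0) (vs ! ((0 + 1) mod length vs))"
    using cycle unfolding sd_cycle_def by blast
  then have first: "fst (vs ! 0) < k"
    by (simp add: sd_edge_def)
  define f where "f = fst (vs ! 0)"
  have "fst (vs ! ((0 + (k - f)) mod length vs)) = (f + (k - f)) mod k"
    unfolding f_def by (rule sd_cycle_layer[OF cycle len])
  then have "fst (vs ! ((k - f) mod length vs)) = 0"
    using first by (simp add: f_def)
  moreover have "(k - f) mod length vs < length vs"
    using len by simp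
  ultimately show ?thesis
    by (rule that[rotated])
qed

lemma cycle_edges_successor:
  assumes "distinct vs" "i < length vs" "(vs ! i, v) \<in> cycle_edges vs"
  shows "v = vs ! ((i + 1) mod length vs)"
proof -
  have "\<exists>i'. (vs ! i, v) = (vs ! i', vs ! ((i' + 1) mod length vs)) \<and> i' < length vs"
    using assms(3) by (simp only: cycle_edges_def mem_Collect_eq)
  then obtain i' where i': "(vs ! i, v) = (vs ! i', vs ! ((i' + 1) mod length vs)) \<and> i' < length vs" ..
  then have "i' = i"
    using nth_eq_iff_index_eq[OF assms(1) _ assms(2), of i'] by simp
  then show ?thesis
    using i' by simp
qed

locale rooted_sd_cycle =
  fixes k :: nat and n :: "nat \<Rightarrow> nat" and A :: "nat \<Rightarrow> real mat"
    and vs :: "(nat \<times> nat) list" and i0 :: nat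
  assumes cycle: "sd_cycle k n A vs" and root: "i0 < length vs" "fst (vs ! i0) = 0"
begin

definition walk :: "nat \<Rightarrow> nat" where
  "walk t = snd (vs ! ((i0 + t) mod length vs))"

lemma vertex_eq: "vs ! ((i0 + t) mod length vs) = (t mod k, walk t)"
  using sd_cycle_layer[OF cycle root(1), of t] root(2) by (simp add: walk_def prod_eq_iff)

lemma next_index: "((i0 + t) mod length vs + 1) mod length vs = (i0 + Suc t) mod length vs"
  by (simp add: mod_Suc_eq)

lemma walk_edge: "sd_edge k n A (t mod k, walk t) (Suc t mod k, walk (Suc t))"
proof -
  have "(i0 + t) mod length vs < length vs"
    using root(1) by (intro mod_less_divisor) (cases vs, simp_all)
  then have "sd_edge k n A (vs ! ((i0 + t) mod length vs))
      (vs ! (((i0 + t) mod length vs + 1) mod length vs))"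
    using cycle by (simp add: sd_cycle_def)
  then show ?thesis
    unfolding next_index vertex_eq .
qed

lemma walk_is_layered:
  assumes edges: "sd_edges k n A = cycle_edges vs"
    and carrier: "\<And>j. j < k \<Longrightarrow> A j \<in> carrier_mat (n j) (n (Suc j mod k))"
  shows "layered_walk k n A walk"
proof
  show "walk t < n (t mod k)" for t
    using walk_edge[of t] by (simp add: sd_edge_def)
  show "A (t mod k) $$ (walk t, b) = (if b = walk (Suc t) then A (t mod k) $$ (walk t, walk (Suc t)) else 0)"
    if b: "b < n (Suc t mod k)" for t b
  proof (cases "b = walk (Suc t)")
    case False
    show ?thesis
    proof (rule ccontr)
      assume "\<not> ?thesis"
      then have "sd_edge k n A (t mod k, walk t) (Suc t mod k, b)"
        using walk_edge[of t] b False by (simp add: sd_edge_def)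
      then have "(vs ! ((i0 + t) mod length vs), (Suc t mod k, b)) \<in> cycle_edges vs"
        using edges unfolding vertex_eq sd_edges_def by blast
      then have "(Suc t mod k, b) = vs ! (((i0 + t) mod length vs + 1) mod length vs)"
        using cycle root(1) by (intro cycle_edges_successor) (simp_all add: sd_cycle_def)
      then show False
        using False unfolding next_index vertex_eq by simp
    qed
  qed simp
qed (rule carrier)

lemma walk_period: "walk (t + length vs) = walk t"
  by (simp add: walk_def add.assoc[symmetric])

lemma walk_inj:
  assumes "t < length vs" "t' < length vs" "t mod k = t' mod k" "walk t = walk t'"
  shows "t = t'"
proof -
  have "vs ! ((i0 + t) mod length vs) = vs ! ((i0 + t') mod length vs)"
    using assms(3,4) unfolding vertex_eq by simp
  then have "(i0 + t) mod length vs = (i0 + t') mod length vs"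
    using cycle root(1) by (simp add: sd_cycle_def nth_eq_iff_index_eq)
  then have "t mod length vs = t' mod length vs"
    by (rule add_mod_cancel_left_nat)
  then show ?thesis
    using assms(1,2) by simp
qed

lemma prod_walk_weight:
  "(\<Prod>t<length vs. A (t mod k) $$ (walk t, walk (Suc t))) = cycle_weight A vs"
proof -
  let ?w = "\<lambda>i. A (fst (vs ! i)) $$ (snd (vs ! i), snd (vs ! ((i + 1) mod length vs)))"
  have "(\<Prod>t<length vs. A (t mod k) $$ (walk t, walk (Suc t))) =
      (\<Prod>t<length vs. ?w ((i0 + t) mod length vs))"
    unfolding next_index vertex_eq by (simp add: walk_def)
  also have "\<dots> = cycle_weight A vs"
    unfolding cycle_weight_def by (rule prod_rotate_mod)
  finally show ?thesis .
qed

end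

lemma single_cycle_principal_minor:
  assumes "0 < k" and carrier: "\<And>j. j < k \<Longrightarrow> A j \<in> carrier_mat (n j) (n (Suc j mod k))"
    and cycle: "sd_cycle k n A vs" and edges: "sd_edges k n A = cycle_edges vs"
    and len: "length vs = r * k"
  obtains I where "I \<subseteq> {0..<dim_row (cyc_prod k n A)}" "I \<noteq> {}"
    "det (submatrix (cyc_prod k n A) I I) = (-1) ^ (r - 1) * cycle_weight A vs"
proof -
  have "length vs \<noteq> 0"
    using cycle by (simp add: sd_cycle_def)
  then have "0 < r"
    using len by simp
  obtain i0 where "i0 < length vs" "fst (vs ! i0) = 0"
    by (rule sd_cycle_meets_layer_zero[OF cycle])
  then interpret rooted_sd_cycle k n A vs i0
    by (intro rooted_sd_cycle.intro[OF cycle])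
  interpret layered_walk k n A walk
    by (rule walk_is_layered[OF edges carrier])
  obtain I where "I \<subseteq> {0..<dim_row (cyc_prod k n A)}" "I \<noteq> {}"
    "det (submatrix (cyc_prod k n A) I I) = (-1) ^ (r - 1) * (\<Prod>t<r * k. weight t)"
    by (rule cyc_prod_principal_minor[OF \<open>0 < k\<close> \<open>0 < r\<close>
          walk_period[unfolded len] walk_inj[unfolded len]])
  then show ?thesis
    unfolding prod_walk_weight[unfolded len] by (rule that)
qed

theorem lemma5:
  fixes k :: nat and n :: "nat \<Rightarrow> nat" and A :: "nat \<Rightarrow> real mat"
  assumes "k > 0"
    and "\<forall>j < k. n j > 0"
    and "\<forall>j < k. A j \<in> carrier_mat (n j) (n ((j + 1) mod k))"
    and "\<exists>C. e_cycle k n A C \<and> sd_edges k n A = cycle_edges C"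
  shows "\<not> P0_matrix (cyc_prod k n A)"
proof
  assume P0: "P0_matrix (cyc_prod k n A)"
  obtain C where e_cyc: "e_cycle k n A C" and edges: "sd_edges k n A = cycle_edges C"
    using assms(4) by blast
  define r where "r = length C div k"
  have cycle: "sd_cycle k n A C"
    using e_cyc by (simp add: e_cycle_def)
  have len: "length C = r * k" and "0 < r" and parity: "even (r + cycle_neg_count A C)"
    using e_cycle_length_parity[OF e_cyc] by (simp_all add: r_def)
  obtain I where I: "I \<subseteq> {0..<dim_row (cyc_prod k n A)}" "I \<noteq> {}"
    and det: "det (submatrix (cyc_prod k n A) I I) = (-1) ^ (r - 1) * cycle_weight A C"
    by (rule single_cycle_principal_minor[OF assms(1) _ cycle edges len]) (use assms(3) in simp)
  have "sgn (det (submatrix (cyc_prod k n A) I I)) = (-1) ^ (r - 1 + cycle_neg_count A C)"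
    unfolding det sgn_mult sgn_cycle_weight[OF cycle] by (simp add: sgn_neg_one_power power_add)
  also have "\<dots> = -1"
    using parity \<open>0 < r\<close> by (simp add: minus_one_power_iff)
  finally have "det (submatrix (cyc_prod k n A) I I) < 0"
    by (simp add: sgn_1_neg)
  moreover have "det (submatrix (cyc_prod k n A) I I) \<ge> 0"
    using P0 I unfolding P0_matrix_def by blast
  ultimately show False
    by simp
qed

end
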